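(* Let $i\ge 5$ be an odd integer and let \[B(i)=\begin{cases}\{\tfrac{i+1}{2}+1,\tfrac{i+1}{2}+3,\dots,i\}, & \text{if } (i+1)/2 \text{ is even},\\ \{\tfrac{i+1}{2},\tfrac{i+1}{2}+2,\dots,i\}, & \text{if } (i+1)/2 \text{ is odd}.\end{cases}\] Then $S(i)=\bigcap_{j\in B(i)}T(j)$, and this intersection is a factorization of $S(i)$ into irreducible numerical semigroups (i.e. it cannot be refined).
   Context: $\mathbb{N}$ denotes the non-negative integers. A numerical semigroup is a submonoid of $(\mathbb{N},+)$ with finite complement. A numerical semigroup is irreducible if it cannot be written as the intersection of two numerical semigroups properly containing it. For an odd integer $j\ge 3$, $T(j)=\{0,\tfrac{j+1}{2},\tfrac{j+1}{2}+1,\dots,j-1\}\cup\{n\in\mathbb{Z}:n\ge j+1\}$; each $T(j)$ is an irreducible numerical semigroup. For odd $i\ge5$, $S(i)=\langle 2,i\rangle\cap T(i)$, where $\langle 2,i\rangle=\{2x+iy:x,y\in\mathbb{N}\}$. Given a numerical semigroup $S$ and irreducible numerical semigroups $S_1,\dots,S_n$, the expression $S_1\cap\dots\cap S_n$ is a factorization of $S$ (of length $n$) if $S=S_1\cap\dots\cap S_n$ and $S\neq\bigcap_{j\in J}S_j$ for every nonempty proper subset $J\subsetneq\{1,\dots,n\}$. *)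

theory Defs
  imports Main
begin

definition numerical_semigroup :: "nat set \<Rightarrow> bool" where
  "numerical_semigroup S \<longleftrightarrow> 0 \<in> S \<and> (\<forall>x\<in>S. \<forall>y\<in>S. x + y \<in> S) \<and> finite (UNIV - S)"

definition irreducible_ns :: "nat set \<Rightarrow> bool" where
  "irreducible_ns S \<longleftrightarrow> numerical_semigroup S \<and>
     \<not> (\<exists>S1 S2. numerical_semigroup S1 \<and> numerical_semigroup S2 \<and>
                 S \<subset> S1 \<and> S \<subset> S2 \<and> S = S1 \<inter> S2)"

definition T :: "nat \<Rightarrow> nat set" where
  "T j = {0} \<union> {(j + 1) div 2 ..< j} \<union> {j + 1 ..}"

definition gen2 :: "nat \<Rightarrow> nat set" where
  "gen2 i = {2 * x + i * y | x y. True}"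

definition S :: "nat \<Rightarrow> nat set" where
  "S i = gen2 i \<inter> T i"

definition B :: "nat \<Rightarrow> nat set" where
  "B i = (let h = (i + 1) div 2 in
          if even h then {h + 1 + 2 * k | k. h + 1 + 2 * k \<le> i}
          else {h + 2 * k | k. h + 2 * k \<le> i})"

definition is_factorization :: "nat set \<Rightarrow> ('i \<Rightarrow> nat set) \<Rightarrow> 'i set \<Rightarrow> bool" where
  "is_factorization Sg Ss I \<longleftrightarrow> finite I \<and> I \<noteq> {} \<and> (\<forall>k\<in>I. irreducible_ns (Ss k)) \<and>
     Sg = (\<Inter>k\<in>I. Ss k) \<and>
     (\<forall>J. J \<subseteq> I \<and> J \<noteq> {} \<and> J \<noteq> I \<longrightarrow> Sg \<noteq> (\<Inter>k\<in>J. Ss k))"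

end

theory Submission
  imports Defs
begin

text \<open>Every element of \<open>B(i)\<close> is an odd \<open>j\<close> with \<open>(i+1)/2 \<le> j \<le> i\<close>, and conversely; the two
  cases in the definition only ensure that the enumeration starts at an odd number. Since
  \<open>(j+1)/2 \<le> (i+1)/2 \<le> j'\<close> for all \<open>j, j' \<in> B(i)\<close>, each \<open>j' \<noteq> j\<close> lies in \<open>T(j)\<close>. Hence
  \<open>\<Inter>T(j)\<close> consists of \<open>T(i)\<close> with the odd numbers of \<open>[(i+1)/2, i)\<close> removed, which is \<open>S(i)\<close>;
  and dropping \<open>T(j)\<close> from the family puts the gap \<open>j\<close> of \<open>S(i)\<close> back, so no subfamily
  suffices. Irreducibility of \<open>T(j)\<close>: any numerical semigroup properly containing it contains
  some \<open>x < (j+1)/2\<close> or \<open>j\<close> itself, and in the first case also \<open>j = x + (j - x)\<close>.\<close>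

lemma mem_T: "x \<in> T j \<longleftrightarrow> x = 0 \<or> ((j + 1) div 2 \<le> x \<and> x < j) \<or> j + 1 \<le> x"
  unfolding T_def by auto

lemma mem_T_if_half_le: "(j + 1) div 2 \<le> x \<Longrightarrow> x \<noteq> j \<Longrightarrow> x \<in> T j"
  unfolding mem_T by linarith

lemma numerical_semigroup_T:
  assumes "odd j"
  shows "numerical_semigroup (T j)"
proof -
  have "UNIV - T j \<subseteq> {..j}" by (auto simp: mem_T)
  then have "finite (UNIV - T j)" using finite_subset by blast
  moreover have "\<forall>x\<in>T j. \<forall>y\<in>T j. x + y \<in> T j"
    using assms by (auto simp: mem_T elim!: oddE)
  ultimately show ?thesis unfolding numerical_semigroup_def by (simp add: mem_T)
qed

lemma mem_if_T_psubset:
  assumes "odd j" "numerical_semigroup S'" "T j \<subset> S'"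
  shows "j \<in> S'"
proof -
  obtain x where x: "x \<in> S'" "x \<notin> T j" using assms(3) by blast
  show ?thesis
  proof (cases "x = j")
    case True
    then show ?thesis using x by simp
  next
    case False
    then have "x < (j + 1) div 2" "0 < x" using x(2) by (auto simp: mem_T)
    then have "j - x \<in> T j" using assms(1) by (auto simp: mem_T elim!: oddE)
    then have "x + (j - x) \<in> S'"
      using x(1) assms(2,3) unfolding numerical_semigroup_def by blast
    then show ?thesis using \<open>x < (j + 1) div 2\<close> by simp
  qed
qed

lemma irreducible_T:
  assumes "odd j" "3 \<le> j"
  shows "irreducible_ns (T j)"
proof -
  have "j \<notin> T j" using assms by (simp add: mem_T)
  then show ?thesis
    unfolding irreducible_ns_def
    using numerical_semigroup_T[OF assms(1)] mem_if_T_psubset[OF assms(1)] by blast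
qed

lemma mem_gen2:
  assumes "odd i"
  shows "x \<in> gen2 i \<longleftrightarrow> even x \<or> i \<le> x"
proof
  assume "x \<in> gen2 i"
  then obtain a b where "x = 2 * a + i * b" unfolding gen2_def by blast
  then show "even x \<or> i \<le> x" by (cases b) auto
next
  assume x: "even x \<or> i \<le> x"
  have "x = 2 * (x div 2) + i * 0 \<or> x = 2 * ((x - i) div 2) + i * 1"
    using x assms by (cases "even x") auto
  then show "x \<in> gen2 i" unfolding gen2_def by blast
qed

lemma mem_S:
  assumes "odd i"
  shows "x \<in> S i \<longleftrightarrow> x = 0 \<or> (even x \<and> (i + 1) div 2 \<le> x \<and> x < i) \<or> i + 1 \<le> x"
  unfolding S_def by (auto simp: mem_gen2[OF assms] mem_T)

lemma odd_eq_plus_even: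
  fixes j h :: nat
  assumes "odd j" "h \<le> j"
  shows "\<exists>k. j = (if even h then h + 1 else h) + 2 * k"
proof -
  let ?h' = "if even h then h + 1 else h"
  have "?h' \<le> j" "even (j - ?h')" using assms by (auto elim!: oddE evenE)
  then show ?thesis by (metis evenE le_add_diff_inverse)
qed

lemma B_eq:
  assumes "odd i"
  shows "B i = {j. odd j \<and> (i + 1) div 2 \<le> j \<and> j \<le> i}"
proof (intro set_eqI iffI)
  fix j
  assume "j \<in> B i"
  then show "j \<in> {j. odd j \<and> (i + 1) div 2 \<le> j \<and> j \<le> i}"
    unfolding B_def Let_def by (auto split: if_splits)
next
  fix j
  assume "j \<in> {j. odd j \<and> (i + 1) div 2 \<le> j \<and> j \<le> i}"
  then have j: "odd j" "(i + 1) div 2 \<le> j" "j \<le> i" by auto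
  define h where "h = (i + 1) div 2"
  obtain k where k: "j = (if even h then h + 1 else h) + 2 * k"
    using odd_eq_plus_even j(1,2) unfolding h_def by blast
  show "j \<in> B i"
  proof (cases "even h")
    case True
    then have "j \<in> {h + 1 + 2 * k | k. h + 1 + 2 * k \<le> i}" using k j(3) by auto
    with True show ?thesis unfolding B_def Let_def h_def by simp
  next
    case False
    then have "j \<in> {h + 2 * k | k. h + 2 * k \<le> i}" using k j(3) by auto
    with False show ?thesis unfolding B_def Let_def h_def by simp
  qed
qed

lemma self_mem_B: "odd i \<Longrightarrow> i \<in> B i"
  by (auto simp: B_eq elim!: oddE)

lemma mem_T_if_mem_B:
  assumes "odd i" "j \<in> B i" "k \<in> B i" "j \<noteq> k"
  shows "j \<in> T k"
proof (rule mem_T_if_half_le)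
  have "(k + 1) div 2 \<le> (i + 1) div 2" using assms(1,3) by (intro div_le_mono) (simp add: B_eq)
  then show "(k + 1) div 2 \<le> j" using assms(1,2) by (simp add: B_eq)
qed (use assms(4) in simp)

lemma S_eq_Inter_T:
  assumes "odd i"
  shows "S i = (\<Inter>j\<in>B i. T j)"
proof (intro set_eqI iffI)
  fix x
  assume x: "x \<in> S i"
  show "x \<in> (\<Inter>j\<in>B i. T j)"
  proof
    fix j
    assume j: "j \<in> B i"
    then have j': "(j + 1) div 2 \<le> (i + 1) div 2" "j \<le> i" "odd j"
      using assms(1) by (auto simp: B_eq intro: div_le_mono)
    from x consider "x = 0" | "even x" "(i + 1) div 2 \<le> x" | "i + 1 \<le> x"
      unfolding mem_S[OF assms(1)] by blast
    then show "x \<in> T j"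
    proof cases
      case 2
      then have "x \<noteq> j" using j' by auto
      then show ?thesis using 2 j' by (intro mem_T_if_half_le) auto
    qed (use j' in \<open>auto simp: mem_T\<close>)
  qed
next
  fix x
  assume x: "x \<in> (\<Inter>j\<in>B i. T j)"
  have "x \<in> T i" using x self_mem_B[OF assms] by blast
  moreover have "x \<notin> B i"
  proof
    assume "x \<in> B i"
    then have "x \<in> T x" "odd x" using x assms(1) by (auto simp: B_eq)
    then show False by (simp add: mem_T)
  qed
  ultimately show "x \<in> S i"
    unfolding mem_S[OF assms(1)] mem_T B_eq[OF assms(1)] by auto
qed

lemma is_factorizationI:
  assumes "finite I" "I \<noteq> {}" "\<And>k. k \<in> I \<Longrightarrow> irreducible_ns (Ss k)"
    and "Sg = (\<Inter>k\<in>I. Ss k)"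
    and "\<And>k. k \<in> I \<Longrightarrow> \<exists>x. x \<notin> Sg \<and> x \<in> (\<Inter>k'\<in>I - {k}. Ss k')"
  shows "is_factorization Sg Ss I"
proof -
  have "Sg \<noteq> (\<Inter>k'\<in>J. Ss k')" if J: "J \<subseteq> I" "J \<noteq> I" for J
  proof -
    obtain k where k: "k \<in> I" "J \<subseteq> I - {k}" using J by blast
    obtain x where x: "x \<notin> Sg" "x \<in> (\<Inter>k'\<in>I - {k}. Ss k')" using assms(5)[OF k(1)] by blast
    have "x \<in> (\<Inter>k'\<in>J. Ss k')" using x(2) k(2) by blast
    with x(1) show ?thesis by blast
  qed
  then show ?thesis
    unfolding is_factorization_def using assms(1-4) by (intro conjI allI impI ballI) auto
qed

theorem lemma2p2:
  fixes i :: nat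
  assumes "odd i" and "i \<ge> 5"
  shows "S i = (\<Inter>j\<in>B i. T j) \<and> is_factorization (S i) T (B i)"
proof
  show eq: "S i = (\<Inter>j\<in>B i. T j)" using assms by (simp add: S_eq_Inter_T)
  show "is_factorization (S i) T (B i)"
  proof (rule is_factorizationI[OF _ _ _ eq])
    show "finite (B i)" using assms(1) by (simp add: B_eq)
    show "B i \<noteq> {}" using self_mem_B[OF assms(1)] by blast
    show "irreducible_ns (T j)" if "j \<in> B i" for j
      using that assms by (intro irreducible_T) (auto simp: B_eq)
    show "\<exists>x. x \<notin> S i \<and> x \<in> (\<Inter>k\<in>B i - {j}. T k)" if j: "j \<in> B i" for j
    proof (intro exI conjI)
      show "j \<notin> S i" using j assms(1) by (auto simp: B_eq mem_S)
      show "j \<in> (\<Inter>k\<in>B i - {j}. T k)" using j assms(1) mem_T_if_mem_B by auto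
    qed
  qed
qed

end
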